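(* Let $U$ be a unitary representation of the translation group $\mathbb R^{d+1}$ on $\mathcal H$ with spectrum in the closed forward light cone, write $U(x_0,x_1)=U(x_0,x_1,0,\dots,0)$, and let $P$ be the generator with $U(t,0)=e^{itP}$. Fix $a,b\in\mathbb R$ and set $\lambda(s)=\big((b-a)\sinh2\pi s,\,(a-b)\cosh2\pi s+b-a\big)$. If $\Phi\in\mathcal H$ has finite energy, i.e. $\Phi\in D(P^{1/2})$, then $s\mapsto(\Phi,U(\lambda(s))\Phi)$ is differentiable at $s=0$ with $$-i\frac{d}{ds}\Big|_{s=0}(\Phi,U(\lambda(s))\Phi)=2\pi(b-a)(\Phi,P\Phi).$$ Moreover, if $\Phi\in D(P)$, then $-i\lim_{s\to0}\frac{U(\lambda(s))\Phi-\Phi}{s}=2\pi(b-a)P\Phi$ in norm. *)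

theory Defs
  imports "HOL-Analysis.Analysis"
begin

text \<open>Complex Hilbert space structure on a real Banach space 'h: a complex scalar
multiplication sc extending scaleR, and an inner product ip that is antilinear in
the first and linear in the second argument (physics convention), with
ip x x = norm x squared.  Completeness comes from the class banach.\<close>

definition complex_hilbert ::
  "(complex \<Rightarrow> 'h::{real_normed_vector,banach} \<Rightarrow> 'h) \<Rightarrow> ('h \<Rightarrow> 'h \<Rightarrow> complex) \<Rightarrow> bool" where
  "complex_hilbert sc ip \<longleftrightarrow>
     (\<forall>r x. sc (complex_of_real r) x = r *\<^sub>R x) \<and>
     (\<forall>c d x. sc (c * d) x = sc c (sc d x)) \<and>
     (\<forall>c x y. sc c (x + y) = sc c x + sc c y) \<and>
     (\<forall>c d x. sc (c + d) x = sc c x + sc d x) \<and>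
     (\<forall>c x. norm (sc c x) = norm c * norm x) \<and>
     (\<forall>x y z. ip x (y + z) = ip x y + ip x z) \<and>
     (\<forall>c x y. ip x (sc c y) = c * ip x y) \<and>
     (\<forall>x y. ip y x = cnj (ip x y)) \<and>
     (\<forall>x. ip x x = complex_of_real ((norm x)\<^sup>2))"

text \<open>Strongly continuous unitary representation of the translation group
R^(d+1) = real \<times> 'v (time \<times> space, 'v a Euclidean space of dimension d).\<close>

definition unitary_rep ::
  "(complex \<Rightarrow> 'h::{real_normed_vector,banach} \<Rightarrow> 'h) \<Rightarrow> ('h \<Rightarrow> 'h \<Rightarrow> complex) \<Rightarrow>
   (real \<times> 'v::euclidean_space \<Rightarrow> 'h \<Rightarrow> 'h) \<Rightarrow> bool" where
  "unitary_rep sc ip U \<longleftrightarrow>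
     (\<forall>x. (\<forall>\<phi> \<psi>. U x (\<phi> + \<psi>) = U x \<phi> + U x \<psi>) \<and> (\<forall>c \<phi>. U x (sc c \<phi>) = sc c (U x \<phi>))) \<and>
     (\<forall>x \<phi> \<psi>. ip (U x \<phi>) (U x \<psi>) = ip \<phi> \<psi>) \<and>
     (\<forall>x. surj (U x)) \<and>
     (\<forall>\<phi>. U 0 \<phi> = \<phi>) \<and>
     (\<forall>x y \<phi>. U (x + y) \<phi> = U x (U y \<phi>)) \<and>
     (\<forall>\<phi>. continuous_on UNIV (\<lambda>x. U x \<phi>))"

definition mink :: "real \<times> 'v::euclidean_space \<Rightarrow> real \<times> 'v \<Rightarrow> real" where
  "mink p x = fst p * fst x - snd p \<bullet> snd x"

definition forward_cone :: "(real \<times> 'v::euclidean_space) set" where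
  "forward_cone = {p. norm (snd p) \<le> fst p}"

text \<open>mu is the spectral measure of phi: the finite Borel measure (Phi, E(.) Phi) on
momentum space with (Phi, U(x) Phi) = integral of exp(i p.x) d mu(p).\<close>

definition spectral_measure_of ::
  "('h::{real_normed_vector,banach} \<Rightarrow> 'h \<Rightarrow> complex) \<Rightarrow> (real \<times> 'v::euclidean_space \<Rightarrow> 'h \<Rightarrow> 'h) \<Rightarrow>
   'h \<Rightarrow> (real \<times> 'v) measure \<Rightarrow> bool" where
  "spectral_measure_of ip U \<phi> \<mu> \<longleftrightarrow>
     finite_measure \<mu> \<and> sets \<mu> = sets borel \<and>
     (\<forall>x. ip \<phi> (U x \<phi>) = (\<integral>p. cis (mink p x) \<partial>\<mu>))"

text \<open>Spectrum of U contained in the closed forward light cone: every spectral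
measure (Phi, E(.) Phi) exists and is concentrated on the cone.\<close>

definition spectrum_in_forward_cone ::
  "('h::{real_normed_vector,banach} \<Rightarrow> 'h \<Rightarrow> complex) \<Rightarrow> (real \<times> 'v::euclidean_space \<Rightarrow> 'h \<Rightarrow> 'h) \<Rightarrow> bool" where
  "spectrum_in_forward_cone ip U \<longleftrightarrow>
     (\<forall>\<phi>. \<exists>\<mu>. spectral_measure_of ip U \<phi> \<mu> \<and> emeasure \<mu> (UNIV - forward_cone) = 0)"

text \<open>Generator P of t \<mapsto> U(t,0) = exp(itP): Phi \<in> D(P) with P Phi = psi
iff (U(t,0) Phi - Phi)/t \<rightarrow> i psi in norm.\<close>

definition generator_value ::
  "(complex \<Rightarrow> 'h::{real_normed_vector,banach} \<Rightarrow> 'h) \<Rightarrow> (real \<times> 'v::euclidean_space \<Rightarrow> 'h \<Rightarrow> 'h) \<Rightarrow>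
   'h \<Rightarrow> 'h \<Rightarrow> bool" where
  "generator_value sc U \<phi> \<psi> \<longleftrightarrow>
     ((\<lambda>t. inverse t *\<^sub>R (U (t, 0) \<phi> - \<phi>)) \<longlongrightarrow> sc \<i> \<psi>) (at 0)"

definition U2 :: "(real \<times> 'v::euclidean_space \<Rightarrow> 'h \<Rightarrow> 'h) \<Rightarrow> 'v \<Rightarrow> real \<Rightarrow> real \<Rightarrow> 'h \<Rightarrow> 'h" where
  "U2 U e x0 x1 = U (x0, x1 *\<^sub>R e)"

definition lam :: "real \<Rightarrow> real \<Rightarrow> real \<Rightarrow> real \<times> real" where
  "lam a b s = ((b - a) * sinh (2 * pi * s), (a - b) * cosh (2 * pi * s) + b - a)"

end

theory Submission
  imports Defs "HOL-Probability.Probability"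
begin

text \<open>
  Write (Phi, U(x) Phi) as the Fourier transform of the spectral measure mu of Phi, which lives on
  the forward cone. There |p.x| <= p0 (|x0| + |x|), so the difference quotients of exp(i p.lambda(s))
  are dominated by a multiple of p0, which is integrable for vectors of finite energy; dominated
  convergence gives the derivative, and only the tangent (2 pi (b - a), 0) of lambda at 0 enters.
  The hypothesis is about an arbitrary spectral measure, which need not be the cone-supported one,
  but all spectral measures of Phi have the same p0-marginal (Levy's uniqueness theorem), hence
  the same energy.

  For Phi in D(P), Fatou's lemma applied to (2 - 2 cos (t p0)) / t^2 bounds the integral of p0^2 by
  |P Phi|^2, so |U(0, y) Phi - Phi| <= |y| |P Phi| by the cone estimate. Writing
  U(lambda(s)) = U(lambda0(s), 0) U(0, lambda1(s)) with lambda1(s) = O(s^2), the spatial factor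
  does not contribute and the temporal one yields i lambda0'(0) P Phi.
\<close>

lemma norm_cis_minus_one_le: "cmod (cis u - 1) \<le> \<bar>u\<bar>"
  using iexp_approx1[of u 0] by (simp add: cis_conv_exp)

lemma norm_cis_minus_one_sq: "(cmod (cis u - 1))\<^sup>2 = 2 - 2 * cos u"
proof -
  have "(cmod (cis u - 1))\<^sup>2 = (cos u - 1)\<^sup>2 + (sin u)\<^sup>2"
    by (simp add: cmod_power2)
  also have "\<dots> = 2 - 2 * cos u"
    using sin_cos_squared_add[of u] by (simp add: power2_eq_square algebra_simps)
  finally show ?thesis .
qed

lemma two_minus_two_cos_le: "2 - 2 * cos u \<le> (u::real)\<^sup>2"
  using power_mono[OF norm_cis_minus_one_le[of u], of 2] by (simp add: norm_cis_minus_one_sq)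

lemma has_vector_derivative_cis:
  assumes "(\<theta> has_real_derivative d) (at x)"
  shows "((\<lambda>t. cis (\<theta> t)) has_vector_derivative \<i> * complex_of_real d * cis (\<theta> x)) (at x)"
  using has_derivative_cis[OF assms[unfolded has_field_derivative_def]]
  by (simp add: has_vector_derivative_def scaleR_conv_of_real mult_ac)

lemma has_vector_derivative_iff_difference_quotient:
  fixes f :: "real \<Rightarrow> 'a::real_normed_vector"
  shows "(f has_vector_derivative D) (at x within S) \<longleftrightarrow>
    ((\<lambda>y. inverse (y - x) *\<^sub>R (f y - f x)) \<longlongrightarrow> D) (at x within S)"
proof -
  have "norm (((f y - f x) - (y - x) *\<^sub>R D) /\<^sub>R norm (y - x)) =
        norm (inverse (y - x) *\<^sub>R (f y - f x) - D)" if "y \<noteq> x" for y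
  proof -
    have "(f y - f x) - (y - x) *\<^sub>R D = (y - x) *\<^sub>R (inverse (y - x) *\<^sub>R (f y - f x) - D)"
      using that by (simp add: scaleR_diff_right)
    then have "norm ((f y - f x) - (y - x) *\<^sub>R D) =
        \<bar>y - x\<bar> * norm (inverse (y - x) *\<^sub>R (f y - f x) - D)"
      by simp
    then show ?thesis using that by (simp add: divide_simps)
  qed
  note norm_eq = this
  have "eventually (\<lambda>y. y \<noteq> x) (at x within S)"
    by (simp add: eventually_at_filter)
  then have "eventually (\<lambda>y. norm (((f y - f x) - (y - x) *\<^sub>R D) /\<^sub>R norm (y - x)) =
        norm (inverse (y - x) *\<^sub>R (f y - f x) - D)) (at x within S)"
    by eventually_elim (rule norm_eq)
  then have quotient:
    "((\<lambda>y. norm (((f y - f x) - (y - x) *\<^sub>R D) /\<^sub>R norm (y - x))) \<longlongrightarrow> 0) (at x within S)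
      \<longleftrightarrow> ((\<lambda>y. norm (inverse (y - x) *\<^sub>R (f y - f x) - D)) \<longlongrightarrow> 0) (at x within S)"
    by (rule tendsto_cong)
  show ?thesis
    unfolding has_vector_derivative_def has_derivative_at_within
    using bounded_linear_scaleR_left[of D] quotient
      tendsto_norm_zero_iff[of "\<lambda>y. ((f y - f x) - (y - x) *\<^sub>R D) /\<^sub>R norm (y - x)" "at x within S"]
      tendsto_norm_zero_iff[of "\<lambda>y. inverse (y - x) *\<^sub>R (f y - f x) - D" "at x within S"]
      LIM_zero_iff[of "\<lambda>y. inverse (y - x) *\<^sub>R (f y - f x)" D "at x within S"]
    by blast
qed

lemma tendsto_two_minus_two_cos_quotient:
  fixes c :: real
  shows "((\<lambda>t. (2 - 2 * cos (c * t)) / t\<^sup>2) \<longlongrightarrow> c\<^sup>2) (at 0)"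
proof -
  have "((\<lambda>t. c * t) has_real_derivative c) (at 0)"
    by (auto intro!: derivative_eq_intros)
  from has_vector_derivative_cis[OF this]
  have "((\<lambda>t. inverse t *\<^sub>R (cis (c * t) - 1)) \<longlongrightarrow> \<i> * complex_of_real c) (at 0)"
    unfolding has_vector_derivative_iff_difference_quotient
    by (simp only: diff_zero mult_zero_right cis_zero mult_1_right)
  then have "((\<lambda>t. (cmod (inverse t *\<^sub>R (cis (c * t) - 1)))\<^sup>2)
      \<longlongrightarrow> (cmod (\<i> * complex_of_real c))\<^sup>2) (at 0)"
    by (intro tendsto_intros)
  then show ?thesis
    by (simp add: norm_cis_minus_one_sq norm_mult power_mult_distrib power_inverse
        divide_inverse mult.commute)
qed

lemma integral_dominated_convergence_at:
  fixes s :: "'c::first_countable_topology \<Rightarrow> 'a \<Rightarrow> 'b::{banach, second_countable_topology}"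
  assumes "f \<in> borel_measurable M" "\<And>t. s t \<in> borel_measurable M" "integrable M w"
    and lim: "AE x in M. ((\<lambda>t. s t x) \<longlongrightarrow> f x) (at t0 within T)"
    and bound: "\<forall>\<^sub>F t in at t0 within T. AE x in M. norm (s t x) \<le> w x"
  shows "((\<lambda>t. integral\<^sup>L M (s t)) \<longlongrightarrow> integral\<^sup>L M f) (at t0 within T)"
proof (subst tendsto_at_iff_sequentially, intro allI impI)
  fix X :: "nat \<Rightarrow> 'c" assume "\<forall>i. X i \<in> T - {t0}" and "X \<longlonglongrightarrow> t0"
  then have X: "filterlim X (at t0 within T) sequentially"
    by (auto simp: filterlim_at)
  from filterlim_iff[THEN iffD1, OF X, rule_format, OF bound]
  obtain N where w: "\<And>n. N \<le> n \<Longrightarrow> AE x in M. norm (s (X n) x) \<le> w x"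
    by (auto simp: eventually_sequentially)
  show "((\<lambda>t. integral\<^sup>L M (s t)) \<circ> X) \<longlonglongrightarrow> integral\<^sup>L M f"
    unfolding comp_def
  proof (rule LIMSEQ_offset, rule integral_dominated_convergence)
    show "AE x in M. norm (s (X (n + N)) x) \<le> w x" for n
      by (rule w) auto
    show "AE x in M. (\<lambda>n. s (X (n + N)) x) \<longlonglongrightarrow> f x"
      using lim
    proof eventually_elim
      fix x assume "((\<lambda>t. s t x) \<longlongrightarrow> f x) (at t0 within T)"
      then show "(\<lambda>n. s (X (n + N)) x) \<longlonglongrightarrow> f x"
        by (intro LIMSEQ_ignore_initial_segment filterlim_compose[OF _ X])
    qed
  qed (use assms in auto)
qed

section \<open>The Minkowski pairing on the forward cone\<close>

lemma bounded_linear_mink: "bounded_linear (mink p)"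
  unfolding mink_def by (intro bounded_linear_intros)

lemma mink_zero_right [simp]: "mink p 0 = 0"
  by (simp add: mink_def)

lemma continuous_on_mink: "continuous_on UNIV (\<lambda>p. mink p x)"
  unfolding mink_def by (intro continuous_intros)

lemma forward_cone_closed: "closed forward_cone"
  unfolding forward_cone_def by (intro closed_Collect_le continuous_intros)

lemma abs_mink_le_on_forward_cone:
  assumes "p \<in> forward_cone"
  shows "\<bar>mink p y\<bar> \<le> \<bar>fst p\<bar> * (\<bar>fst y\<bar> + norm (snd y))"
proof -
  have "\<bar>snd p \<bullet> snd y\<bar> \<le> norm (snd p) * norm (snd y)"
    by (rule Cauchy_Schwarz_ineq2)
  also have "\<dots> \<le> \<bar>fst p\<bar> * norm (snd y)"
    using assms unfolding forward_cone_def by (intro mult_right_mono) auto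
  finally have "\<bar>snd p \<bullet> snd y\<bar> \<le> \<bar>fst p\<bar> * norm (snd y)" .
  then show ?thesis
    using abs_triangle_ineq4[of "fst p * fst y" "snd p \<bullet> snd y"]
    unfolding mink_def by (simp add: abs_mult distrib_left)
qed

lemma norm_cis_mink_quotient_le_on_forward_cone:
  assumes "p \<in> forward_cone" and "norm y \<le> C * \<bar>t\<bar>" and "0 \<le> C"
  shows "norm (inverse t *\<^sub>R (cis (mink p y) - 1)) \<le> 2 * C * \<bar>fst p\<bar>"
proof -
  have "\<bar>fst y\<bar> + norm (snd y) \<le> 2 * (C * \<bar>t\<bar>)"
    using norm_fst_le[of "fst y" "snd y"] norm_snd_le[of "snd y" "fst y"] assms(2) by simp
  from mult_left_mono[OF this abs_ge_zero[of "fst p"]]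
  have "\<bar>mink p y\<bar> \<le> 2 * C * \<bar>fst p\<bar> * \<bar>t\<bar>"
    using abs_mink_le_on_forward_cone[OF assms(1), of y] by (simp add: mult_ac)
  have "norm (inverse t *\<^sub>R (cis (mink p y) - 1)) \<le> \<bar>inverse t\<bar> * \<bar>mink p y\<bar>"
    using norm_cis_minus_one_le[of "mink p y"] by (simp add: mult_left_mono)
  also have "\<dots> \<le> \<bar>inverse t\<bar> * (2 * C * \<bar>fst p\<bar> * \<bar>t\<bar>)"
    by (rule mult_left_mono) (fact, simp)
  also have "\<dots> = 2 * C * \<bar>fst p\<bar> * (\<bar>inverse t\<bar> * \<bar>t\<bar>)"
    by (simp only: mult_ac)
  also have "\<dots> \<le> 2 * C * \<bar>fst p\<bar>"
    using assms(3) by (intro mult_left_le) (cases "t = 0", simp_all)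
  finally show ?thesis .
qed

lemma continuous_on_imp_borel_measurable:
  assumes "sets M = sets borel" and "continuous_on UNIV f"
  shows "f \<in> borel_measurable M"
  unfolding measurable_cong_sets[OF assms(1) refl]
  by (rule borel_measurable_continuous_onI[OF assms(2)])

lemma integrable_cis_mink:
  assumes "finite_measure M" and "sets M = sets borel"
  shows "integrable M (\<lambda>p. cis (mink p y))"
  by (rule finite_measure.integrable_const_bound[OF assms(1), where B=1])
    (auto intro!: continuous_on_imp_borel_measurable[OF assms(2)]
      continuous_intros continuous_on_mink)

lemma eventually_norm_le_of_has_vector_derivative:
  fixes \<gamma> :: "real \<Rightarrow> 'a::real_normed_vector"
  assumes "(\<gamma> has_vector_derivative w) (at 0)" and "\<gamma> 0 = 0"
  shows "\<forall>\<^sub>F t in at 0. norm (\<gamma> t) \<le> (norm w + 1) * \<bar>t\<bar>"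
proof -
  have "((\<lambda>t. inverse t *\<^sub>R \<gamma> t) \<longlongrightarrow> w) (at 0)"
    using assms by (simp add: has_vector_derivative_iff_difference_quotient)
  then have "\<forall>\<^sub>F t in at 0. norm (inverse t *\<^sub>R \<gamma> t) < norm w + 1"
    by (rule order_tendstoD(2)[OF tendsto_norm]) simp
  moreover have "\<forall>\<^sub>F t in at (0::real). t \<noteq> 0"
    by (simp add: eventually_at_filter)
  ultimately show ?thesis
  proof eventually_elim
    case (elim t)
    then show ?case
      by (simp add: field_simps)
  qed
qed

lemma has_vector_derivative_fourier_on_forward_cone:
  fixes \<mu> :: "(real \<times> 'v::euclidean_space) measure" and \<gamma> :: "real \<Rightarrow> real \<times> 'v"
  assumes fin: "finite_measure \<mu>" and sets: "sets \<mu> = sets borel"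
    and cone: "AE p in \<mu>. p \<in> forward_cone" and int: "integrable \<mu> fst"
    and \<gamma>: "(\<gamma> has_vector_derivative w) (at 0)" and \<gamma>0: "\<gamma> 0 = 0"
  shows "((\<lambda>s. \<integral>p. cis (mink p (\<gamma> s)) \<partial>\<mu>) has_vector_derivative
           \<i> * complex_of_real (\<integral>p. mink p w \<partial>\<mu>)) (at 0)"
proof -
  define g where "g t = (\<lambda>p. inverse t *\<^sub>R (cis (mink p (\<gamma> t)) - 1))" for t
  have quotient: "inverse t *\<^sub>R ((\<integral>p. cis (mink p (\<gamma> t)) \<partial>\<mu>) - (\<integral>p. cis (mink p (\<gamma> 0)) \<partial>\<mu>))
      = integral\<^sup>L \<mu> (g t)" for t
  proof -
    have "integral\<^sup>L \<mu> (g t) = inverse t *\<^sub>R (\<integral>p. cis (mink p (\<gamma> t)) - 1 \<partial>\<mu>)"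
      unfolding g_def by (rule integral_scaleR_right)
    also have "(\<integral>p. cis (mink p (\<gamma> t)) - 1 \<partial>\<mu>) = (\<integral>p. cis (mink p (\<gamma> t)) \<partial>\<mu>) - (\<integral>p. 1 \<partial>\<mu>)"
      by (rule Bochner_Integration.integral_diff[OF integrable_cis_mink[OF fin sets]
            finite_measure.integrable_const[OF fin]])
    finally show ?thesis
      by (simp add: \<gamma>0)
  qed
  have g_lim: "((\<lambda>t. g t p) \<longlongrightarrow> \<i> * complex_of_real (mink p w)) (at 0)" for p
  proof -
    have "((\<lambda>t. mink p (\<gamma> t)) has_real_derivative mink p w) (at 0)"
      unfolding has_real_derivative_iff_has_vector_derivative
      by (rule bounded_linear.has_vector_derivative[OF bounded_linear_mink \<gamma>])
    from has_vector_derivative_cis[OF this] show ?thesis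
      unfolding has_vector_derivative_iff_difference_quotient g_def \<gamma>0
      by (simp only: diff_zero mink_zero_right cis_zero mult_1_right)
  qed
  have g_bound: "\<forall>\<^sub>F t in at 0. AE p in \<mu>. norm (g t p) \<le> 2 * (norm w + 1) * \<bar>fst p\<bar>"
    using eventually_norm_le_of_has_vector_derivative[OF \<gamma> \<gamma>0]
  proof eventually_elim
    case (elim t)
    note small = this
    from cone show ?case
    proof eventually_elim
      case (elim p)
      show ?case
        unfolding g_def by (rule norm_cis_mink_quotient_le_on_forward_cone[OF elim small]) simp
    qed
  qed
  have "((\<lambda>t. integral\<^sup>L \<mu> (g t)) \<longlongrightarrow> (\<integral>p. \<i> * complex_of_real (mink p w) \<partial>\<mu>)) (at 0)"
    by (rule integral_dominated_convergence_at[OF _ _ _ _ g_bound])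
      (use int g_lim in \<open>auto simp: g_def intro!: continuous_on_imp_borel_measurable[OF sets]
        continuous_intros continuous_on_mink\<close>)
  then show ?thesis
    unfolding has_vector_derivative_iff_difference_quotient diff_zero quotient by simp
qed

section \<open>Spectral measures\<close>

lemma char_density_const:
  assumes "sets M = sets borel" and "0 \<le> c"
  shows "char (density M (\<lambda>_. ennreal c)) t = c *\<^sub>R char M t"
proof -
  have "(\<lambda>x. iexp (t * x)) \<in> borel_measurable M"
    by (intro continuous_on_imp_borel_measurable[OF assms(1)] continuous_intros)
  then show ?thesis
    unfolding char_def using assms(2) by (simp add: integral_density)
qed

lemma finite_measure_eq_if_char_eq:
  fixes M N :: "real measure"
  assumes M: "finite_measure M" "sets M = sets borel"
    and N: "finite_measure N" "sets N = sets borel"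
    and char: "char M = char N"
  shows "M = N"
proof -
  have space: "space M = UNIV" "space N = UNIV"
    using sets_eq_imp_space_eq[OF M(2)] sets_eq_imp_space_eq[OF N(2)] by simp_all
  have "char M 0 = complex_of_real (measure M UNIV)" "char N 0 = complex_of_real (measure N UNIV)"
    unfolding char_def using space by (simp_all add: scaleR_conv_of_real)
  then have mass: "measure N UNIV = measure M UNIV"
    using char by simp
  define c where "c = measure M UNIV"
  show ?thesis
  proof (cases "c = 0")
    case True
    have "emeasure M A = 0" "emeasure N A = 0" for A
      using True mass space finite_measure.emeasure_eq_measure[OF M(1)]
        finite_measure.emeasure_eq_measure[OF N(1)]
        emeasure_space[of M A] emeasure_space[of N A]
      by (auto simp: c_def)
    then show ?thesis
      by (intro measure_eqI) (simp_all add: M(2) N(2))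
  next
    case False
    then have "c > 0"
      by (simp add: c_def order_le_neq_trans)
    \<comment> \<open>Levy's uniqueness theorem is stated for probability measures.\<close>
    have normalized: "real_distribution (density K (\<lambda>_. ennreal (1 / c)))"
      if "finite_measure K" "sets K = sets borel" "measure K UNIV = c" for K :: "real measure"
    proof -
      have "emeasure K UNIV = ennreal c"
        using that finite_measure.emeasure_eq_measure[OF that(1)] sets_eq_imp_space_eq[OF that(2)]
        by simp
      then have "emeasure (density K (\<lambda>_. ennreal (1 / c))) UNIV = 1"
        using \<open>c > 0\<close> that(2) by (simp add: emeasure_density_const ennreal_mult[symmetric])
      then show ?thesis
        using that(2) sets_eq_imp_space_eq[OF that(2)]
        by (auto simp: real_distribution_def real_distribution_axioms_def intro!: prob_spaceI)
    qed
    have "density M (\<lambda>_. ennreal (1 / c)) = density N (\<lambda>_. ennreal (1 / c))"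
      using normalized[OF M] normalized[OF N] char \<open>c > 0\<close>
      by (intro Levy_uniqueness ext) (simp_all add: c_def mass char_density_const M(2) N(2))
    then have "density (density M (\<lambda>_. ennreal (1 / c))) (\<lambda>_. ennreal c) =
               density (density N (\<lambda>_. ennreal (1 / c))) (\<lambda>_. ennreal c)"
      by simp
    moreover have "density (density K (\<lambda>_. ennreal (1 / c))) (\<lambda>_. ennreal c) = K"
      for K :: "real measure"
      using \<open>c > 0\<close> by (simp add: density_density_eq ennreal_mult[symmetric] density_1)
    ultimately show ?thesis
      by simp
  qed
qed

lemma spectral_measure_ofD:
  assumes "spectral_measure_of ip U \<phi> \<mu>"
  shows "finite_measure \<mu>" and "sets \<mu> = sets borel"
    and "ip \<phi> (U x \<phi>) = (\<integral>p. cis (mink p x) \<partial>\<mu>)"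
  using assms unfolding spectral_measure_of_def by blast+

lemma spectrum_in_forward_coneE:
  assumes "spectrum_in_forward_cone ip U"
  obtains \<mu> where "spectral_measure_of ip U \<phi> \<mu>" and "AE p in \<mu>. p \<in> forward_cone"
proof -
  obtain \<mu> where \<mu>: "spectral_measure_of ip U \<phi> \<mu>" "emeasure \<mu> (UNIV - forward_cone) = 0"
    using assms unfolding spectrum_in_forward_cone_def by blast
  have "UNIV - forward_cone \<in> null_sets \<mu>"
    using \<mu> spectral_measure_ofD(2)[OF \<mu>(1)] forward_cone_closed
    by (auto intro!: null_setsI borel_open)
  then have "AE p in \<mu>. p \<in> forward_cone"
    by (rule AE_I') auto
  with \<mu>(1) show ?thesis
    using that by blast
qed

lemma char_distr_fst_spectral_measure:
  assumes "spectral_measure_of ip U \<phi> \<mu>"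
  shows "char (distr \<mu> borel fst) t = ip \<phi> (U (t, 0) \<phi>)"
proof -
  have "fst \<in> borel_measurable \<mu>"
    by (intro continuous_on_imp_borel_measurable[OF spectral_measure_ofD(2)[OF assms]]
        continuous_intros)
  then have "char (distr \<mu> borel fst) t = (CLINT p|\<mu>. iexp (t * fst p))"
    unfolding char_def
    by (intro integral_distr) (auto intro!: borel_measurable_continuous_onI continuous_intros)
  also have "\<dots> = (CLINT p|\<mu>. cis (mink p (t, 0)))"
    by (simp add: mink_def cis_conv_exp mult.commute)
  finally show ?thesis
    by (simp add: spectral_measure_ofD(3)[OF assms])
qed

lemma spectral_measure_fst_moment_unique:
  assumes \<mu>: "spectral_measure_of ip U \<phi> \<mu>" and \<nu>: "spectral_measure_of ip U \<phi> \<nu>"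
    and "integrable \<mu> fst"
  shows "integrable \<nu> fst" and "(\<integral>p. fst p \<partial>\<nu>) = (\<integral>p. fst p \<partial>\<mu>)"
proof -
  have fst_measurable: "fst \<in> borel_measurable \<mu>" "fst \<in> borel_measurable \<nu>"
    by (intro continuous_on_imp_borel_measurable[OF spectral_measure_ofD(2)[OF \<mu>]]
        continuous_on_imp_borel_measurable[OF spectral_measure_ofD(2)[OF \<nu>]] continuous_intros)+
  have marginal: "distr \<mu> borel fst = distr \<nu> borel fst"
    using spectral_measure_ofD(1,2)[OF \<mu>] spectral_measure_ofD(1,2)[OF \<nu>] fst_measurable
    by (intro finite_measure_eq_if_char_eq ext)
      (simp_all add: finite_measure.finite_measure_distr char_distr_fst_spectral_measure[OF \<mu>]
        char_distr_fst_spectral_measure[OF \<nu>])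
  show "integrable \<nu> fst"
    using assms(3) marginal integrable_distr_eq[OF fst_measurable(1), of "\<lambda>x. x"]
      integrable_distr_eq[OF fst_measurable(2), of "\<lambda>x. x"] by simp
  show "(\<integral>p. fst p \<partial>\<nu>) = (\<integral>p. fst p \<partial>\<mu>)"
    using marginal integral_distr[OF fst_measurable(1), of "\<lambda>x. x"]
      integral_distr[OF fst_measurable(2), of "\<lambda>x. x"] by simp
qed

lemma spectral_derivative_along_time_direction:
  fixes \<gamma> :: "real \<Rightarrow> real \<times> 'v::euclidean_space"
  assumes cone: "spectrum_in_forward_cone ip U"
    and \<mu>: "spectral_measure_of ip U \<phi> \<mu>" and energy: "integrable \<mu> fst"
    and \<gamma>: "(\<gamma> has_vector_derivative (v, 0)) (at 0)" and \<gamma>0: "\<gamma> 0 = 0"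
  shows "\<exists>D. ((\<lambda>s. ip \<phi> (U (\<gamma> s) \<phi>)) has_vector_derivative D) (at 0)
           \<and> - \<i> * D = complex_of_real (v * (\<integral>p. fst p \<partial>\<mu>))"
proof -
  obtain \<nu> where \<nu>: "spectral_measure_of ip U \<phi> \<nu>" and on_cone: "AE p in \<nu>. p \<in> forward_cone"
    using spectrum_in_forward_coneE[OF cone] .
  note same_energy = spectral_measure_fst_moment_unique[OF \<mu> \<nu> energy]
  have "(\<integral>p. mink p (v, 0) \<partial>\<nu>) = v * (\<integral>p. fst p \<partial>\<mu>)"
    by (simp add: mink_def same_energy(2) mult.commute)
  with has_vector_derivative_fourier_on_forward_cone[OF spectral_measure_ofD(1,2)[OF \<nu>] on_cone
      same_energy(1) \<gamma> \<gamma>0]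
  have "((\<lambda>s. ip \<phi> (U (\<gamma> s) \<phi>)) has_vector_derivative
      \<i> * complex_of_real (v * (\<integral>p. fst p \<partial>\<mu>))) (at 0)"
    unfolding spectral_measure_ofD(3)[OF \<nu>] by simp
  then show ?thesis
    by (intro exI[of _ "\<i> * complex_of_real (v * (\<integral>p. fst p \<partial>\<mu>))"]) simp
qed

section \<open>Unitary representations of the translation group\<close>

locale translation_representation =
  fixes sc :: "complex \<Rightarrow> 'h::{real_normed_vector,banach} \<Rightarrow> 'h"
    and ip :: "'h \<Rightarrow> 'h \<Rightarrow> complex"
    and U :: "real \<times> 'v::euclidean_space \<Rightarrow> 'h \<Rightarrow> 'h"
  assumes hilbert: "complex_hilbert sc ip"
    and unitary: "unitary_rep sc ip U"
begin

lemma sc_of_real: "sc (complex_of_real r) x = r *\<^sub>R x"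
  and sc_mult: "sc (c * d) x = sc c (sc d x)"
  and sc_add_right: "sc c (x + y) = sc c x + sc c y"
  and norm_sc: "norm (sc c x) = cmod c * norm x"
  using hilbert[unfolded complex_hilbert_def] by simp_all

lemma ip_add_right: "ip x (y + z) = ip x y + ip x z"
  and ip_commute: "ip y x = cnj (ip x y)"
  and ip_self: "ip x x = complex_of_real ((norm x)\<^sup>2)"
  using hilbert[unfolded complex_hilbert_def] by blast+

lemma U_add: "U x (\<phi> + \<psi>) = U x \<phi> + U x \<psi>"
  and ip_U_U: "ip (U x \<phi>) (U x \<psi>) = ip \<phi> \<psi>"
  and U_zero: "U 0 \<phi> = \<phi>"
  and U_plus: "U (x + y) \<phi> = U x (U y \<phi>)"
  using unitary[unfolded unitary_rep_def] by blast+

lemma ip_diff_right: "ip x (y - z) = ip x y - ip x z"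
  using ip_add_right[of x "y - z" z] by simp

lemma ip_diff_left: "ip (y - z) x = ip y x - ip z x"
  using ip_diff_right[of x y z] ip_commute[of "y - z" x] ip_commute[of y x] ip_commute[of z x]
  by simp

lemma U_diff: "U x (\<phi> - \<psi>) = U x \<phi> - U x \<psi>"
  using U_add[of x "\<phi> - \<psi>" \<psi>] by simp

lemma norm_U: "norm (U x \<phi>) = norm \<phi>"
proof -
  have "(norm (U x \<phi>))\<^sup>2 = (norm \<phi>)\<^sup>2"
    using ip_U_U[of x \<phi> \<phi>] unfolding ip_self of_real_eq_iff .
  then show ?thesis
    by (simp add: power2_eq_iff_nonneg)
qed

lemma sc_scaleR: "sc c (r *\<^sub>R x) = r *\<^sub>R sc c x"
  by (metis mult.commute sc_mult sc_of_real)

lemma bounded_linear_sc: "bounded_linear (sc c)"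
proof
  show "sc c (x + y) = sc c x + sc c y" for x y
    by (rule sc_add_right)
  show "sc c (r *\<^sub>R x) = r *\<^sub>R sc c x" for r x
    by (rule sc_scaleR)
  show "\<exists>K. \<forall>x. norm (sc c x) \<le> norm x * K"
    by (rule exI[of _ "cmod c"]) (simp add: norm_sc mult.commute)
qed

lemma norm_U_minus_sq_spectral:
  assumes \<mu>: "spectral_measure_of ip U \<phi> \<mu>"
  shows "(norm (U x \<phi> - \<phi>))\<^sup>2 = (\<integral>p. 2 - 2 * cos (mink p x) \<partial>\<mu>)"
proof -
  note fin = spectral_measure_ofD(1)[OF \<mu>] and sets = spectral_measure_ofD(2)[OF \<mu>]
  note integrable_cis = integrable_cis_mink[OF fin sets]
  have integrable_cos: "integrable \<mu> (\<lambda>p. cos (mink p y))" for y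
    using integrable_Re[OF integrable_cis[of y]] by simp
  have Re_ip: "Re (ip \<phi> (U y \<phi>)) = (\<integral>p. cos (mink p y) \<partial>\<mu>)" for y
    using integral_Re[OF integrable_cis[of y]] by (simp add: spectral_measure_ofD(3)[OF \<mu>])
  have "(norm (U x \<phi> - \<phi>))\<^sup>2 = Re (ip (U x \<phi> - \<phi>) (U x \<phi> - \<phi>))"
    by (simp add: ip_self)
  also have "\<dots> = 2 * Re (ip \<phi> (U 0 \<phi>)) - 2 * Re (ip \<phi> (U x \<phi>))"
    using ip_commute[of \<phi> "U x \<phi>"] by (simp add: ip_diff_left ip_diff_right ip_U_U U_zero)
  also have "\<dots> = (\<integral>p. 2 \<partial>\<mu>) - (\<integral>p. 2 * cos (mink p x) \<partial>\<mu>)"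
    using integrable_cos[of x] finite_measure.integrable_const[OF fin] sets_eq_imp_space_eq[OF sets]
    by (simp add: Re_ip)
  also have "\<dots> = (\<integral>p. 2 - 2 * cos (mink p x) \<partial>\<mu>)"
    using integrable_cos[of x] finite_measure.integrable_const[OF fin]
    by (intro Bochner_Integration.integral_diff[symmetric]) auto
  finally show ?thesis .
qed

lemma nn_integral_two_minus_two_cos_spectral:
  assumes \<mu>: "spectral_measure_of ip U \<phi> \<mu>"
  shows "(\<integral>\<^sup>+ p. ennreal (2 - 2 * cos (mink p x)) \<partial>\<mu>) = ennreal ((norm (U x \<phi> - \<phi>))\<^sup>2)"
proof -
  note fin = spectral_measure_ofD(1)[OF \<mu>] and sets = spectral_measure_ofD(2)[OF \<mu>]
  have "integrable \<mu> (\<lambda>p. 2 - 2 * cos (mink p x))"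
    using integrable_Re[OF integrable_cis_mink[OF fin sets, of x]]
      finite_measure.integrable_const[OF fin]
    by (intro Bochner_Integration.integrable_diff integrable_mult_right) simp_all
  then show ?thesis
    by (simp add: nn_integral_eq_integral norm_U_minus_sq_spectral[OF \<mu>])
qed

lemma sc_minus_i_sc_i: "sc (- \<i>) (sc \<i> x) = x"
  using sc_mult[of "- \<i>" \<i> x] sc_of_real[of 1 x] by simp

lemma nn_integral_fst_sq_le_generator:
  assumes \<mu>: "spectral_measure_of ip U \<phi> \<mu>" and gen: "generator_value sc U \<phi> \<psi>"
  shows "(\<integral>\<^sup>+ p. ennreal ((fst p)\<^sup>2) \<partial>\<mu>) \<le> ennreal ((norm \<psi>)\<^sup>2)"
proof -
  note sets = spectral_measure_ofD(2)[OF \<mu>]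
  define T :: "nat \<Rightarrow> real" where "T = (\<lambda>n. 1 / real (Suc n))"
  have T: "filterlim T (at 0) sequentially"
    unfolding T_def using LIMSEQ_inverse_real_of_nat by (auto simp: filterlim_at inverse_eq_divide)
  define v where "v n p = ennreal ((2 - 2 * cos (mink p (T n, 0))) / (T n)\<^sup>2)"
    for n and p :: "real \<times> 'v"
  have v_measurable: "v n \<in> borel_measurable \<mu>" for n
    unfolding v_def[abs_def]
    by (intro measurable_compose[OF _ measurable_ennreal]
        continuous_on_imp_borel_measurable[OF sets] continuous_intros continuous_on_mink)
      (simp add: T_def)
  have "(\<integral>\<^sup>+ p. v n p \<partial>\<mu>) =
      ennreal (1 / (T n)\<^sup>2) * (\<integral>\<^sup>+ p. ennreal (2 - 2 * cos (mink p (T n, 0))) \<partial>\<mu>)" for n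
    unfolding v_def by (subst nn_integral_cmult[symmetric])
      (auto intro!: measurable_compose[OF _ measurable_ennreal]
        continuous_on_imp_borel_measurable[OF sets] continuous_intros continuous_on_mink
        simp: ennreal_mult[symmetric])
  also have "\<dots> n = ennreal ((norm (inverse (T n) *\<^sub>R (U (T n, 0) \<phi> - \<phi>)))\<^sup>2)" for n
    by (simp add: nn_integral_two_minus_two_cos_spectral[OF \<mu>] ennreal_mult[symmetric]
        power_mult_distrib power_inverse divide_inverse)
  finally have v_integral: "(\<integral>\<^sup>+ p. v n p \<partial>\<mu>) =
      ennreal ((norm (inverse (T n) *\<^sub>R (U (T n, 0) \<phi> - \<phi>)))\<^sup>2)" for n .
  have "(\<lambda>n. (norm (inverse (T n) *\<^sub>R (U (T n, 0) \<phi> - \<phi>)))\<^sup>2) \<longlonglongrightarrow> (norm (sc \<i> \<psi>))\<^sup>2"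
    using gen unfolding generator_value_def by (intro tendsto_intros filterlim_compose[OF _ T])
  then have integral_lim: "(\<lambda>n. \<integral>\<^sup>+ p. v n p \<partial>\<mu>) \<longlonglongrightarrow> ennreal ((norm \<psi>)\<^sup>2)"
    unfolding v_integral by (intro tendsto_ennrealI) (simp add: norm_sc)
  have pointwise_lim: "(\<lambda>n. v n p) \<longlonglongrightarrow> ennreal ((fst p)\<^sup>2)" for p
    using filterlim_compose[OF tendsto_two_minus_two_cos_quotient[of "fst p"] T]
    unfolding v_def by (intro tendsto_ennrealI) (simp add: mink_def)
  have "(\<integral>\<^sup>+ p. ennreal ((fst p)\<^sup>2) \<partial>\<mu>) = (\<integral>\<^sup>+ p. liminf (\<lambda>n. v n p) \<partial>\<mu>)"
    using lim_imp_Liminf[OF trivial_limit_sequentially pointwise_lim] by simp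
  also have "\<dots> \<le> liminf (\<lambda>n. \<integral>\<^sup>+ p. v n p \<partial>\<mu>)"
    by (rule nn_integral_liminf) (rule v_measurable)
  also have "\<dots> = ennreal ((norm \<psi>)\<^sup>2)"
    using lim_imp_Liminf[OF trivial_limit_sequentially integral_lim] .
  finally show ?thesis .
qed

lemma norm_U_spatial_minus_le:
  assumes cone: "spectrum_in_forward_cone ip U" and gen: "generator_value sc U \<phi> \<psi>"
  shows "norm (U (0, y) \<phi> - \<phi>) \<le> norm y * norm \<psi>"
proof -
  obtain \<mu> where \<mu>: "spectral_measure_of ip U \<phi> \<mu>" and on_cone: "AE p in \<mu>. p \<in> forward_cone"
    using spectrum_in_forward_coneE[OF cone] .
  note sets = spectral_measure_ofD(2)[OF \<mu>]
  have "ennreal ((norm (U (0, y) \<phi> - \<phi>))\<^sup>2) = (\<integral>\<^sup>+ p. ennreal (2 - 2 * cos (mink p (0, y))) \<partial>\<mu>)"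
    by (rule nn_integral_two_minus_two_cos_spectral[OF \<mu>, symmetric])
  also have "\<dots> \<le> (\<integral>\<^sup>+ p. ennreal ((norm y)\<^sup>2) * ennreal ((fst p)\<^sup>2) \<partial>\<mu>)"
  proof (rule nn_integral_mono_AE)
    show "AE p in \<mu>.
        ennreal (2 - 2 * cos (mink p (0, y))) \<le> ennreal ((norm y)\<^sup>2) * ennreal ((fst p)\<^sup>2)"
      using on_cone
    proof eventually_elim
      case (elim p)
      have "\<bar>mink p (0, y)\<bar> \<le> \<bar>fst p\<bar> * norm y"
        using abs_mink_le_on_forward_cone[OF elim, of "(0, y)"] by simp
      then have "(mink p (0, y))\<^sup>2 \<le> (\<bar>fst p\<bar> * norm y)\<^sup>2"
        using power_mono[OF _ abs_ge_zero, of "mink p (0, y)" _ 2] by simp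
      then have "2 - 2 * cos (mink p (0, y)) \<le> (norm y)\<^sup>2 * (fst p)\<^sup>2"
        using two_minus_two_cos_le[of "mink p (0, y)"]
        by (simp add: power_mult_distrib mult.commute)
      then show ?case
        by (simp add: ennreal_mult[symmetric])
    qed
  qed
  also have "\<dots> = ennreal ((norm y)\<^sup>2) * (\<integral>\<^sup>+ p. ennreal ((fst p)\<^sup>2) \<partial>\<mu>)"
    by (rule nn_integral_cmult)
      (auto intro!: measurable_compose[OF _ measurable_ennreal]
        continuous_on_imp_borel_measurable[OF sets] continuous_intros)
  also have "\<dots> \<le> ennreal ((norm y)\<^sup>2) * ennreal ((norm \<psi>)\<^sup>2)"
    by (intro mult_left_mono nn_integral_fst_sq_le_generator[OF \<mu> gen]) simp
  finally have "(norm (U (0, y) \<phi> - \<phi>))\<^sup>2 \<le> (norm y * norm \<psi>)\<^sup>2"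
    by (simp add: ennreal_mult[symmetric] power_mult_distrib)
  then show ?thesis
    by (rule power2_le_imp_le) simp
qed

lemma generator_valueE:
  assumes "generator_value sc U \<phi> \<psi>"
  obtains G where "isCont G 0" and "G 0 = sc \<i> \<psi>" and "\<And>t. U (t, 0) \<phi> - \<phi> = t *\<^sub>R G t"
proof
  define G where "G t = (if t = 0 then sc \<i> \<psi> else inverse t *\<^sub>R (U (t, 0) \<phi> - \<phi>))" for t
  have "\<forall>\<^sub>F t in at 0. inverse t *\<^sub>R (U (t, 0) \<phi> - \<phi>) = G t"
    by (simp add: eventually_at_filter G_def)
  then show "isCont G 0"
    using assms unfolding generator_value_def isCont_def
    by (simp add: Lim_transform_eventually G_def)
  show "G 0 = sc \<i> \<psi>" and "U (t, 0) \<phi> - \<phi> = t *\<^sub>R G t" for t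
    by (simp_all add: G_def U_zero[unfolded zero_prod_def])
qed

lemma tendsto_difference_quotient_along_time_direction:
  assumes cone: "spectrum_in_forward_cone ip U" and gen: "generator_value sc U \<phi> \<psi>"
    and \<gamma>: "(\<gamma> has_vector_derivative (v, 0)) (at 0)" and \<gamma>0: "\<gamma> 0 = 0"
  shows "((\<lambda>s. inverse s *\<^sub>R (U (\<gamma> s) \<phi> - \<phi>)) \<longlongrightarrow> v *\<^sub>R sc \<i> \<psi>) (at 0)"
proof -
  obtain G where G_cont: "isCont G 0" and G0: "G 0 = sc \<i> \<psi>"
    and time_step: "\<And>t. U (t, 0) \<phi> - \<phi> = t *\<^sub>R G t"
    using generator_valueE[OF gen] by blast
  define x0 where "x0 s = fst (\<gamma> s)" for s
  define y where "y s = snd (\<gamma> s)" for s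
  have x0: "(x0 has_vector_derivative v) (at 0)" and y: "(y has_vector_derivative 0) (at 0)"
    using bounded_linear.has_vector_derivative[OF bounded_linear_fst \<gamma>]
      bounded_linear.has_vector_derivative[OF bounded_linear_snd \<gamma>]
    by (simp_all add: x0_def[abs_def] y_def[abs_def])
  have x0_0: "x0 0 = 0" and y_0: "y 0 = 0"
    using \<gamma>0 by (simp_all add: x0_def y_def)
  have split: "inverse s *\<^sub>R (U (\<gamma> s) \<phi> - \<phi>) =
      inverse s *\<^sub>R U (x0 s, 0) (U (0, y s) \<phi> - \<phi>) + (inverse s * x0 s) *\<^sub>R G (x0 s)" for s
  proof -
    have "U (\<gamma> s) \<phi> = U (x0 s, 0) (U (0, y s) \<phi>)"
      using U_plus[of "(x0 s, 0)" "(0, y s)"] by (simp add: x0_def y_def)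
    then have "U (\<gamma> s) \<phi> - \<phi> = U (x0 s, 0) (U (0, y s) \<phi> - \<phi>) + x0 s *\<^sub>R G (x0 s)"
      by (simp add: U_diff time_step[symmetric])
    then show ?thesis
      by (simp add: scaleR_add_right)
  qed
  have spatial: "((\<lambda>s. inverse s *\<^sub>R U (x0 s, 0) (U (0, y s) \<phi> - \<phi>)) \<longlongrightarrow> 0) (at 0)"
  proof (rule Lim_null_comparison)
    show "\<forall>\<^sub>F s in at 0. norm (inverse s *\<^sub>R U (x0 s, 0) (U (0, y s) \<phi> - \<phi>)) \<le>
        norm (inverse s *\<^sub>R y s) * norm \<psi>"
      using norm_U_spatial_minus_le[OF cone gen]
      by (intro always_eventually allI) (simp add: norm_U mult_left_mono mult.assoc)
    have "((\<lambda>s. inverse s *\<^sub>R y s) \<longlongrightarrow> 0) (at 0)"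
      using y unfolding has_vector_derivative_iff_difference_quotient y_0 by simp
    then show "((\<lambda>s. norm (inverse s *\<^sub>R y s) * norm \<psi>) \<longlongrightarrow> 0) (at 0)"
      by (intro tendsto_mult_left_zero tendsto_norm_zero)
  qed
  have "((\<lambda>s. inverse s * x0 s) \<longlongrightarrow> v) (at 0)"
    using x0 unfolding has_vector_derivative_iff_difference_quotient x0_0 by simp
  moreover have "((\<lambda>s. G (x0 s)) \<longlongrightarrow> G 0) (at 0)"
    using G_cont x0 x0_0 by (intro isCont_tendsto_compose[OF G_cont])
      (metis has_vector_derivative_continuous continuous_at isCont_def)
  ultimately have "((\<lambda>s. (inverse s * x0 s) *\<^sub>R G (x0 s)) \<longlongrightarrow> v *\<^sub>R sc \<i> \<psi>) (at 0)"
    by (auto intro!: tendsto_scaleR simp: G0)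
  then show ?thesis
    unfolding split using tendsto_add[OF spatial] by simp
qed

end

definition lam_path :: "real \<Rightarrow> real \<Rightarrow> 'v::real_vector \<Rightarrow> real \<Rightarrow> real \<times> 'v" where
  "lam_path a b e s = (fst (lam a b s), snd (lam a b s) *\<^sub>R e)"

lemma U2_lam_eq: "(case lam a b s of (x0, x1) \<Rightarrow> U2 U e x0 x1 \<phi>) = U (lam_path a b e s) \<phi>"
  by (simp add: lam_path_def U2_def split_beta)

lemma lam_path_zero: "lam_path a b e 0 = 0"
  by (simp add: lam_path_def lam_def zero_prod_def)

lemma lam_path_has_vector_derivative:
  "(lam_path a b e has_vector_derivative (2 * pi * (b - a), 0)) (at 0)"
proof -
  have "((\<lambda>s. (b - a) * sinh (2 * pi * s)) has_vector_derivative 2 * pi * (b - a)) (at 0)"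
    and "((\<lambda>s. ((a - b) * cosh (2 * pi * s) + b - a) *\<^sub>R e) has_vector_derivative 0) (at 0)"
    by (auto intro!: derivative_eq_intros
        simp: has_real_derivative_iff_has_vector_derivative[symmetric])
  then show ?thesis
    unfolding lam_path_def lam_def by (auto intro: has_vector_derivative_Pair)
qed

theorem lemma3p1:
  fixes sc :: "complex \<Rightarrow> 'h::{real_normed_vector,banach} \<Rightarrow> 'h"
    and ip :: "'h \<Rightarrow> 'h \<Rightarrow> complex"
    and U :: "real \<times> 'v::euclidean_space \<Rightarrow> 'h \<Rightarrow> 'h"
    and e :: 'v and a b :: real and \<phi> :: 'h
  assumes "complex_hilbert sc ip"
    and "unitary_rep sc ip U"
    and "spectrum_in_forward_cone ip U"
    and "e \<in> Basis"
  shows "(\<forall>\<mu>. spectral_measure_of ip U \<phi> \<mu> \<and> integrable \<mu> fst \<longrightarrow>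
            (\<exists>D. ((\<lambda>s. ip \<phi> (case lam a b s of (x0, x1) \<Rightarrow> U2 U e x0 x1 \<phi>)) has_vector_derivative D) (at 0)
                 \<and> - \<i> * D = complex_of_real (2 * pi * (b - a) * (\<integral>p. fst p \<partial>\<mu>))))
       \<and> (\<forall>\<psi>. generator_value sc U \<phi> \<psi> \<longrightarrow>
            ((\<lambda>s. sc (- \<i>) (inverse s *\<^sub>R ((case lam a b s of (x0, x1) \<Rightarrow> U2 U e x0 x1 \<phi>) - \<phi>)))
               \<longlongrightarrow> (2 * pi * (b - a)) *\<^sub>R \<psi>) (at 0))"
proof -
  interpret translation_representation sc ip U
    using assms(1,2) by unfold_locales
  define v where "v = 2 * pi * (b - a)"
  note path = lam_path_has_vector_derivative[of a b e, folded v_def] lam_path_zero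
  show ?thesis
    unfolding U2_lam_eq v_def[symmetric]
  proof (intro conjI allI impI)
    fix \<mu> assume "spectral_measure_of ip U \<phi> \<mu> \<and> integrable \<mu> fst"
    then show "\<exists>D. ((\<lambda>s. ip \<phi> (U (lam_path a b e s) \<phi>)) has_vector_derivative D) (at 0)
        \<and> - \<i> * D = complex_of_real (v * (\<integral>p. fst p \<partial>\<mu>))"
      using spectral_derivative_along_time_direction[OF assms(3) _ _ path] by blast
  next
    fix \<psi> assume "generator_value sc U \<phi> \<psi>"
    from bounded_linear.tendsto[OF bounded_linear_sc[of "- \<i>"]
        tendsto_difference_quotient_along_time_direction[OF assms(3) this path]]
    show "((\<lambda>s. sc (- \<i>) (inverse s *\<^sub>R (U (lam_path a b e s) \<phi> - \<phi>))) \<longlongrightarrow> v *\<^sub>R \<psi>) (at 0)"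
      by (simp add: sc_scaleR sc_minus_i_sc_i)
  qed
qed

end
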